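(* Let $Q\in\partial D$ and let $v$ be a nonnegative harmonic function with respect to $X^{D}$ with Martin measure $\nu$. Suppose that $\mu$ is a nonnegative finite measure on $\partial D$. If $\displaystyle\lim_{x\rightarrow Q}\frac{\delta_{D}(x)}{v(x)}=0$, then for every $\varepsilon>0$ we have $$ \lim_{x\rightarrow Q}\frac{\int_{\partial D \cap \{|Q-z|\geq \varepsilon\}}M_{D}(x,z)\mu(dz)}{v(x)}=0. $$ If instead we only assume $\displaystyle\lim_{x\rightarrow Q}\frac{\delta_{D}(x)}{v(x)}=0$ as $x\to Q$ nontangentially, then for every $\varepsilon>0$ the conclusion $\displaystyle\lim_{x\rightarrow Q}\frac{\int_{\partial D \cap \{|Q-z|\geq \varepsilon\}}M_{D}(x,z)\mu(dz)}{v(x)}=0$ holds with the limit taken as $x\to Q$ nontangentially.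
   Context: Let $d\geq 2$ and let $X_t=W(S_t)$ be a subordinate Brownian motion, where $W$ is a $d$-dimensional Brownian motion and $S$ is an independent subordinator with Laplace exponent $\phi(\lambda)=\lambda+\int_{(0,\infty)}(1-e^{-\lambda t})\mu(t)\,dt$, where $\phi$ is a complete Bernstein function (the Lévy measure has a completely monotone density $\mu(t)$) and for every $K>0$ there is $c=c(K)>1$ with $\mu(r)\le c\,\mu(2r)$ for $r\in(0,K)$. Let $D\subset\mathbb{R}^d$ be a bounded $C^{1,1}$ open set with characteristics $(r_0,\Lambda_0)$, $X^D$ the process $X$ killed upon exiting $D$, $G_D$ its Green function, and $\delta_D(x)$ the Euclidean distance from $x$ to $D^c$. A function $u:D\to[0,\infty)$ is harmonic with respect to $X^D$ if $u(x)=\mathbb{E}_x[u(X^D_{\tau_B})]$ for every $x\in B$ and every open $B$ with compact closure in $D$ (with $u$ set to $0$ at the cemetery). Fix $x_0\in D$; the Martin kernel is $M_D(x,z)=\lim_{y\to z}G_D(x,y)/G_D(x_0,y)$ for $z\in\partial D$, and every nonnegative harmonic $v$ with respect to $X^D$ has the form $v(x)=\int_{\partial D}M_D(x,z)\nu(dz)$ for a unique finite measure $\nu$ on $\partial D$ (its Martin measure). The Martin kernel satisfies $M_D(x,z)\asymp \delta_D(x)/|x-z|^d$ for $x\in D$, $z\in\partial D$. For $Q\in\partial D$ and $\beta>1$ let $A_Q^\beta=\{x\in D:\delta_D(x)<r_0,\ |x-Q|<\beta\delta_D(x)\}$; $x\to Q$ nontangentially means $x\to Q$ with $x\in A_Q^\beta$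 for some $\beta>1$. *)

theory Defs
  imports "HOL-Probability.Probability"
begin

definition dist_compl :: "'a::euclidean_space set \<Rightarrow> 'a \<Rightarrow> real" where
  "dist_compl D x = infdist x (- D)"

text \<open>For every boundary point Q there is a unit vector e (the d-th axis of the
  local coordinate system CS_Q) and a C^{1,1} function psi, with psi 0 = 0,
  gradient g, g 0 = 0, |g| <= Lambda0 and g Lipschitz with constant Lambda0,
  such that, writing y - Q = w + t e with w orthogonal to e,
  D \<inter> B(Q,r0) = {y \<in> B(Q,r0). t > psi w}.
  (psi is a function on the whole space, only its restriction to the
  hyperplane orthogonal to e matters.)\<close>
definition C11_open_set :: "'a::euclidean_space set \<Rightarrow> real \<Rightarrow> real \<Rightarrow> bool" where
  "C11_open_set D r0 \<Lambda>0 \<longleftrightarrow> open D \<and> r0 > 0 \<and> \<Lambda>0 > 0 \<and>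
     (\<forall>Q\<in>frontier D. \<exists>e (\<psi>::'a \<Rightarrow> real) g.
        norm e = 1 \<and> \<psi> 0 = 0 \<and> g 0 = 0 \<and>
        (\<forall>w. (\<psi> has_derivative (\<lambda>h. g w \<bullet> h)) (at w)) \<and>
        (\<forall>w. norm (g w) \<le> \<Lambda>0) \<and>
        (\<forall>w u. norm (g w - g u) \<le> \<Lambda>0 * norm (w - u)) \<and>
        D \<inter> ball Q r0 =
          {y \<in> ball Q r0. (y - Q) \<bullet> e > \<psi> ((y - Q) - ((y - Q) \<bullet> e) *\<^sub>R e)})"

definition nt_region :: "'a::euclidean_space set \<Rightarrow> real \<Rightarrow> 'a \<Rightarrow> real \<Rightarrow> 'a set" where
  "nt_region D r0 Q \<beta> = {x \<in> D. dist_compl D x < r0 \<and> dist x Q < \<beta> * dist_compl D x}"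

definition martin_kernel_estimate :: "'a::euclidean_space set \<Rightarrow> ('a \<Rightarrow> 'a \<Rightarrow> real) \<Rightarrow> bool" where
  "martin_kernel_estimate D M \<longleftrightarrow> (\<exists>C\<ge>1. \<forall>x\<in>D. \<forall>z\<in>frontier D.
      dist_compl D x / (C * dist x z ^ DIM('a)) \<le> M x z \<and>
      M x z \<le> C * dist_compl D x / dist x z ^ DIM('a))"

end

theory Submission
  imports Defs
begin

text \<open>Only the size of the Martin kernel matters. For \<open>|z - Q| \<ge> \<epsilon>\<close> and \<open>|x - Q| < \<epsilon>/2\<close>
  we have \<open>|x - z| \<ge> \<epsilon>/2\<close>, so the upper kernel estimate gives
  \<open>M(x,z) \<le> C \<delta>\<^sub>D(x) / (\<epsilon>/2)\<^sup>d\<close>; integrating against the finite measure \<open>\<mu>\<close>, the part of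
  the Martin integral away from \<open>Q\<close> is \<open>O(\<delta>\<^sub>D(x))\<close> near \<open>Q\<close>, uniformly along any approach
  region. Dividing by \<open>v(x)\<close>, which is nonnegative by the lower kernel estimate, the
  hypothesis \<open>\<delta>\<^sub>D/v \<rightarrow> 0\<close> yields the conclusion, for unrestricted and for nontangential
  approach alike.\<close>

lemma (in finite_measure) norm_integral_le_bound:
  fixes f :: "'a \<Rightarrow> real"
  assumes "f \<in> borel_measurable M" "\<forall>z\<in>space M. norm (f z) \<le> B"
  shows "norm (\<integral>z. f z \<partial>M) \<le> B * measure M (space M)"
proof -
  have "norm (\<integral>z. f z \<partial>M) \<le> (\<integral>z. norm (f z) \<partial>M)"
    by (rule integral_norm_bound)
  also have "\<dots> \<le> (\<integral>z. B \<partial>M)"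
    using assms by (intro integral_mono integrable_const_bound[of _ B] AE_I2) auto
  finally show ?thesis by (simp add: mult.commute)
qed

lemma dist_compl_nonneg: "0 \<le> dist_compl D x"
  unfolding dist_compl_def by (rule infdist_nonneg)

lemma martin_kernel_nonneg:
  assumes "martin_kernel_estimate D M" "x \<in> D" "z \<in> frontier D"
  shows "0 \<le> M x z"
proof -
  obtain C where "C \<ge> 1" "dist_compl D x / (C * dist x z ^ DIM('a)) \<le> M x z"
    using assms unfolding martin_kernel_estimate_def by blast
  moreover have "0 \<le> dist_compl D x / (C * dist x z ^ DIM('a))" if "C \<ge> 1"
    using that dist_compl_nonneg[of D x] by simp
  ultimately show ?thesis by fastforce
qed

lemma martin_integral_nonneg:
  assumes "martin_kernel_estimate D M" "space \<nu> = frontier D" "x \<in> D"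
  shows "0 \<le> (\<integral>z. M x z \<partial>\<nu>)"
  using assms martin_kernel_nonneg by (intro Bochner_Integration.integral_nonneg) auto

lemma martin_kernel_far_bound:
  fixes D :: "'a::euclidean_space set"
  assumes "martin_kernel_estimate D M"
  obtains C where "C \<ge> 0"
    "\<And>x z r. x \<in> D \<Longrightarrow> z \<in> frontier D \<Longrightarrow> 0 < r \<Longrightarrow> r \<le> dist x z \<Longrightarrow>
       M x z \<le> C * dist_compl D x / r ^ DIM('a)"
proof -
  obtain C where C: "C \<ge> 1" and upper: "\<And>x z. x \<in> D \<Longrightarrow> z \<in> frontier D \<Longrightarrow>
      M x z \<le> C * dist_compl D x / dist x z ^ DIM('a)"
    using assms unfolding martin_kernel_estimate_def by blast
  have far: "M x z \<le> C * dist_compl D x / r ^ DIM('a)"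
    if "x \<in> D" "z \<in> frontier D" "0 < r" "r \<le> dist x z" for x z r
  proof -
    have "C * dist_compl D x / dist x z ^ DIM('a) \<le> C * dist_compl D x / r ^ DIM('a)"
      using that C dist_compl_nonneg[of D x]
      by (intro divide_left_mono power_mono mult_pos_pos zero_less_power) auto
    with upper[OF that(1,2)] show ?thesis by linarith
  qed
  show ?thesis
    using C by (intro that[of C] far) auto
qed

lemma martin_integral_far_le:
  fixes D :: "'a::euclidean_space set"
  assumes Mest: "martin_kernel_estimate D M"
    and Mmeas: "\<forall>x\<in>D. M x \<in> borel_measurable \<mu>"
    and mu: "finite_measure \<mu>" "space \<mu> = frontier D"
            "sets \<mu> = sets (restrict_space borel (frontier D))"
    and eps: "\<epsilon> > 0"
  obtains K where
    "\<And>x. x \<in> D \<Longrightarrow> dist x Q < \<epsilon>/2 \<Longrightarrow>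
       norm (\<integral>z. indicator {z. \<epsilon> \<le> dist Q z} z * M x z \<partial>\<mu>) \<le> K * dist_compl D x"
proof -
  obtain C where C: "C \<ge> 0" and far: "\<And>x z r. x \<in> D \<Longrightarrow> z \<in> frontier D \<Longrightarrow> 0 < r \<Longrightarrow>
      r \<le> dist x z \<Longrightarrow> M x z \<le> C * dist_compl D x / r ^ DIM('a)"
    using martin_kernel_far_bound[OF Mest] by blast
  have ind_meas: "(\<lambda>z. indicator {z. \<epsilon> \<le> dist Q z} z :: real) \<in> borel_measurable \<mu>"
    unfolding measurable_cong_sets[OF mu(3) refl]
    by (intro measurable_restrict_space1 borel_measurable_indicator borel_closed
        closed_Collect_le continuous_intros)
  define K where "K = C / (\<epsilon>/2) ^ DIM('a) * measure \<mu> (space \<mu>)"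
  have "norm (\<integral>z. indicator {z. \<epsilon> \<le> dist Q z} z * M x z \<partial>\<mu>) \<le> K * dist_compl D x"
    if x: "x \<in> D" "dist x Q < \<epsilon>/2" for x
  proof -
    have "norm (indicator {z. \<epsilon> \<le> dist Q z} z * M x z) \<le> C * dist_compl D x / (\<epsilon>/2) ^ DIM('a)"
      if z: "z \<in> space \<mu>" for z
    proof (cases "\<epsilon> \<le> dist Q z")
      case True
      have "dist Q z \<le> dist Q x + dist x z" by (rule dist_triangle)
      then have "\<epsilon>/2 \<le> dist x z" using True x(2) by (simp add: dist_commute)
      then show ?thesis
        using True z mu(2) x(1) eps far martin_kernel_nonneg[OF Mest] by simp
    qed (use C eps dist_compl_nonneg[of D x] in simp)
    then have "norm (\<integral>z. indicator {z. \<epsilon> \<le> dist Q z} z * M x z \<partial>\<mu>)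
               \<le> C * dist_compl D x / (\<epsilon>/2) ^ DIM('a) * measure \<mu> (space \<mu>)"
      using ind_meas Mmeas x(1)
      by (intro finite_measure.norm_integral_le_bound[OF mu(1)] borel_measurable_times) auto
    then show ?thesis unfolding K_def by (simp add: field_simps)
  qed
  with that show ?thesis by blast
qed

lemma tendsto_martin_integral_far_over_harmonic:
  fixes D :: "'a::euclidean_space set"
  assumes Mest: "martin_kernel_estimate D M"
    and Mmeas: "\<forall>x\<in>D. M x \<in> borel_measurable \<mu>"
    and nu: "space \<nu> = frontier D"
    and v: "\<forall>x\<in>D. v x = (\<integral>z. M x z \<partial>\<nu>)"
    and mu: "finite_measure \<mu>" "space \<mu> = frontier D"
            "sets \<mu> = sets (restrict_space borel (frontier D))"
    and S: "S \<subseteq> D" and eps: "\<epsilon> > 0"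
    and lim: "((\<lambda>x. dist_compl D x / v x) \<longlongrightarrow> 0) (at Q within S)"
  shows "((\<lambda>x. (\<integral>z. indicator {z. \<epsilon> \<le> dist Q z} z * M x z \<partial>\<mu>) / v x) \<longlongrightarrow> 0)
           (at Q within S)"
proof -
  obtain K where K: "\<And>x. x \<in> D \<Longrightarrow> dist x Q < \<epsilon>/2 \<Longrightarrow>
      norm (\<integral>z. indicator {z. \<epsilon> \<le> dist Q z} z * M x z \<partial>\<mu>) \<le> K * dist_compl D x"
    using martin_integral_far_le[OF Mest Mmeas mu eps] by blast
  have near: "eventually (\<lambda>x. x \<in> S \<and> dist x Q < \<epsilon>/2) (at Q within S)"
    using eps by (auto simp: eventually_at intro!: exI[of _ "\<epsilon>/2"])
  have "eventually (\<lambda>x. norm ((\<integral>z. indicator {z. \<epsilon> \<le> dist Q z} z * M x z \<partial>\<mu>) / v x)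
          \<le> K * (dist_compl D x / v x)) (at Q within S)"
    using near
  proof eventually_elim
    case (elim x)
    then have "x \<in> D" using S by blast
    then have "0 \<le> v x" using v martin_integral_nonneg[OF Mest nu] by simp
    with K[OF \<open>x \<in> D\<close>] elim show ?case
      by (simp add: divide_right_mono)
  qed
  moreover have "((\<lambda>x. K * (dist_compl D x / v x)) \<longlongrightarrow> 0) (at Q within S)"
    using tendsto_mult_right_zero[OF lim] .
  ultimately show ?thesis by (rule Lim_null_comparison)
qed

theorem lemma3p3:
  fixes D :: "'a::euclidean_space set"
    and r0 \<Lambda>0 :: real
    and M :: "'a \<Rightarrow> 'a \<Rightarrow> real"
    and v :: "'a \<Rightarrow> real"
    and \<nu> \<mu> :: "'a measure"
    and Q :: 'a
  assumes dim: "DIM('a) \<ge> 2"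
    and D: "C11_open_set D r0 \<Lambda>0" "bounded D"
    and Mest: "martin_kernel_estimate D M"
    and Mmeas_nu: "\<forall>x\<in>D. M x \<in> borel_measurable \<nu>"
    and Mmeas_mu: "\<forall>x\<in>D. M x \<in> borel_measurable \<mu>"
    and nu: "finite_measure \<nu>" "space \<nu> = frontier D"
            "sets \<nu> = sets (restrict_space borel (frontier D))"
    and v: "\<forall>x\<in>D. v x = (\<integral>z. M x z \<partial>\<nu>)"
    and mu: "finite_measure \<mu>" "space \<mu> = frontier D"
            "sets \<mu> = sets (restrict_space borel (frontier D))"
    and Q: "Q \<in> frontier D"
  shows
    "(((\<lambda>x. dist_compl D x / v x) \<longlongrightarrow> 0) (at Q within D) \<longrightarrow>
       (\<forall>\<epsilon>>0. ((\<lambda>x. (\<integral>z. indicator {z. \<epsilon> \<le> dist Q z} z * M x z \<partial>\<mu>) / v x)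
                  \<longlongrightarrow> 0) (at Q within D)))
     \<and>
     ((\<forall>\<beta>>1. ((\<lambda>x. dist_compl D x / v x) \<longlongrightarrow> 0) (at Q within nt_region D r0 Q \<beta>)) \<longrightarrow>
       (\<forall>\<epsilon>>0. \<forall>\<beta>>1. ((\<lambda>x. (\<integral>z. indicator {z. \<epsilon> \<le> dist Q z} z * M x z \<partial>\<mu>) / v x)
                  \<longlongrightarrow> 0) (at Q within nt_region D r0 Q \<beta>)))"
proof -
  have "nt_region D r0 Q \<beta> \<subseteq> D" for \<beta>
    unfolding nt_region_def by blast
  then show ?thesis
    using tendsto_martin_integral_far_over_harmonic[OF Mest Mmeas_mu nu(2) v mu]
    by blast
qed

end
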